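(* Let $n\ge1$, $K=\mathbb{R}^n_+$, and $\bar x\in K\cap\mathbb{Z}^n$. For every $k\in\{1,\dots,n\}$, every point $x\in Q(\bar x)$ satisfies the $k$-th lex-cut associated with $\bar x$, namely $$\sum_{i=1}^k d^k_i x_i\ \ge\ \sum_{i=1}^k d^k_i\bar x_i .$$
   Context: Lexicographic order: for $x,y\in\mathbb{R}^n$, $x\prec y$ iff $x\ne y$ and $x_i<y_i$ for the smallest index $i$ with $x_i\ne y_i$; $\succeq$ has the obvious meaning. $Q(\bar x):=\operatorname{conv}\{x\in K\cap\mathbb{Z}^n: x\succeq\bar x\}$. For $k\in\{1,\dots,n\}$ and $i\in\{1,\dots,k\}$: $d^k_k=1$; $d^k_{k-1}=\bar x_k$ (if $k\ge2$); and $d^k_i=\bar x_k\prod_{j=i+1}^{k-1}(\bar x_j+1)$ for $i\le k-2$. *)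

theory Defs
  imports "HOL-Analysis.Analysis"
begin

text \<open>Points of R^n are vectors of type real^('n::{finite,linorder}), with the index type 'n a finite linear order
  (playing the role of {1..n} with its usual order).\<close>

definition lex_less :: "real^('n::{finite,linorder}) \<Rightarrow> real^('n::{finite,linorder}) \<Rightarrow> bool" where
  "lex_less x y \<longleftrightarrow> x \<noteq> y \<and> (\<exists>i. x$i < y$i \<and> (\<forall>j<i. x$j = y$j))"

definition lex_ge :: "real^('n::{finite,linorder}) \<Rightarrow> real^('n::{finite,linorder}) \<Rightarrow> bool" where
  "lex_ge x y \<longleftrightarrow> x = y \<or> lex_less y x"

definition nonneg_int_points :: "(real^('n::{finite,linorder})) set" where
  "nonneg_int_points = {x. \<forall>i. 0 \<le> x$i \<and> x$i \<in> \<int>}"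

definition Q :: "real^('n::{finite,linorder}) \<Rightarrow> (real^('n::{finite,linorder})) set" where
  "Q xbar = convex hull {x \<in> nonneg_int_points. lex_ge x xbar}"

definition lexcut_coeff :: "real^('n::{finite,linorder}) \<Rightarrow> ('n::{finite,linorder}) \<Rightarrow> 'n \<Rightarrow> real" where
  "lexcut_coeff xbar k i =
     (if i = k then 1 else xbar$k * (\<Prod>j\<in>{i<..<k}. xbar$j + 1))"

end

theory Submission
  imports Defs
begin

text \<open>For \<open>p < k\<close> the coefficients satisfy \<open>d p = (\<Sum>i\<in>{p<..k}. d i * xbar$i)\<close>, which is the
  expansion of the product \<open>\<Prod>j\<in>{p<..<k}. 1 + xbar$j\<close>. If an integer point \<open>y \<ge> 0\<close> first exceeds
  \<open>xbar\<close> at a coordinate \<open>p \<le> k\<close>, then \<open>y$p \<ge> xbar$p + 1\<close>, and the resulting gain \<open>d p\<close> pays for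
  the entire contribution of the coordinates after \<open>p\<close>, which \<open>y\<close> may have set to zero. So the cut
  holds at every integer point generating \<open>Q xbar\<close>; being a half-space, it holds on their convex hull.\<close>

lemma prod_one_plus_expansion:
  fixes a :: "'i::linorder \<Rightarrow> 'a::comm_ring_1"
  assumes "finite S"
  shows "(\<Prod>j\<in>S. 1 + a j) = 1 + (\<Sum>i\<in>S. a i * (\<Prod>j\<in>S \<inter> {i<..}. 1 + a j))"
  using assms
proof (induction S rule: finite_linorder_min_induct)
  case empty
  then show ?case by simp
next
  case (insert m S)
  have "m \<notin> S"
    using insert.hyps by auto
  have above_m: "insert m S \<inter> {m<..} = S"
    using insert.hyps by auto
  have above_i: "insert m S \<inter> {i<..} = S \<inter> {i<..}" if "i \<in> S" for i
    using insert.hyps that by auto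
  have "1 + (\<Sum>i\<in>insert m S. a i * (\<Prod>j\<in>insert m S \<inter> {i<..}. 1 + a j))
        = 1 + a m * (\<Prod>j\<in>S. 1 + a j) + (\<Sum>i\<in>S. a i * (\<Prod>j\<in>S \<inter> {i<..}. 1 + a j))"
    using insert.hyps(1) \<open>m \<notin> S\<close> by (simp add: above_m above_i add.assoc cong: sum.cong)
  also have "\<dots> = (1 + a m) * (\<Prod>j\<in>S. 1 + a j)"
    using insert.IH by (simp add: algebra_simps)
  also have "\<dots> = (\<Prod>j\<in>insert m S. 1 + a j)"
    using insert.hyps \<open>m \<notin> S\<close> by simp
  finally show ?case ..
qed

lemma lexcut_coeff_telescope:
  fixes xbar :: "real^'n::{finite,linorder}"
  assumes "p < k"
  shows "lexcut_coeff xbar k p = (\<Sum>i\<in>{p<..k}. lexcut_coeff xbar k i * xbar$i)"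
proof -
  let ?S = "{p<..<k}"
  have later: "?S \<inter> {i<..} = {i<..<k}" if "p < i" for i
    using that by auto
  have regroup: "(\<Sum>i\<in>?S. xbar$i * (\<Prod>j\<in>?S \<inter> {i<..}. 1 + xbar$j))
                 = (\<Sum>i\<in>?S. xbar$i * (\<Prod>j\<in>{i<..<k}. 1 + xbar$j))"
    by (rule sum.cong[OF refl]) (simp only: later greaterThanLessThan_iff)
  have expansion: "(\<Prod>j\<in>?S. 1 + xbar$j) = 1 + (\<Sum>i\<in>?S. xbar$i * (\<Prod>j\<in>{i<..<k}. 1 + xbar$j))"
    using prod_one_plus_expansion[of ?S "\<lambda>j. xbar$j"] unfolding regroup by simp
  have "{p<..k} = insert k ?S"
    using assms by auto
  then have "(\<Sum>i\<in>{p<..k}. lexcut_coeff xbar k i * xbar$i)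
        = xbar$k + (\<Sum>i\<in>?S. xbar$k * (\<Prod>j\<in>{i<..<k}. xbar$j + 1) * xbar$i)"
    by (auto simp: lexcut_coeff_def intro!: sum.cong)
  also have "\<dots> = xbar$k * (\<Prod>j\<in>?S. 1 + xbar$j)"
    by (simp add: expansion sum_distrib_left algebra_simps)
  also have "\<dots> = lexcut_coeff xbar k p"
    using assms by (simp add: lexcut_coeff_def add.commute)
  finally show ?thesis ..
qed

lemma lexcut_coeff_nonneg:
  assumes "xbar \<in> nonneg_int_points"
  shows "0 \<le> lexcut_coeff xbar k i"
  using assms unfolding nonneg_int_points_def lexcut_coeff_def
  by (auto intro!: mult_nonneg_nonneg prod_nonneg simp: add_nonneg_nonneg)

lemma Ints_less_imp_add_one_le:
  fixes x y :: real
  assumes "x \<in> \<int>" "y \<in> \<int>" "x < y"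
  shows "x + 1 \<le> y"
  using assms by (elim Ints_cases) simp

lemma lexcut_valid_at_lex_greater_point:
  fixes xbar y :: "real^'n::{finite,linorder}" and k :: 'n
  assumes xbar: "xbar \<in> nonneg_int_points"
    and y: "y \<in> nonneg_int_points" and "lex_ge y xbar"
  shows "(\<Sum>i\<in>{..k}. lexcut_coeff xbar k i * xbar$i) \<le> (\<Sum>i\<in>{..k}. lexcut_coeff xbar k i * y$i)"
proof (cases "y = xbar")
  case False
  let ?d = "lexcut_coeff xbar k"
  from False \<open>lex_ge y xbar\<close> obtain p where less_p: "xbar$p < y$p"
    and equal_before_p: "\<And>j. j < p \<Longrightarrow> xbar$j = y$j"
    by (auto simp: lex_ge_def lex_less_def)
  show ?thesis
  proof (cases "p \<le> k")
    case False
    then show ?thesis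
      using equal_before_p by (intro eq_refl sum.cong) auto
  next
    case True
    have split: "(\<Sum>i\<in>{..k}. f i) = (\<Sum>i\<in>{..<p}. f i) + f p + (\<Sum>i\<in>{p<..k}. f i)"
      for f :: "'n \<Rightarrow> real"
    proof -
      have "{..k} = {..<p} \<union> insert p {p<..k}" and "{..<p} \<inter> insert p {p<..k} = {}"
        using True by auto
      then show ?thesis
        by (simp add: sum.union_disjoint add.assoc)
    qed
    have "y$p \<ge> xbar$p + 1"
      using xbar y less_p by (intro Ints_less_imp_add_one_le) (auto simp: nonneg_int_points_def)
    then have "?d p * y$p \<ge> ?d p * xbar$p + ?d p"
      using lexcut_coeff_nonneg[OF xbar] by (metis distrib_left mult.right_neutral mult_left_mono)
    moreover have "?d p \<ge> (\<Sum>i\<in>{p<..k}. ?d i * xbar$i)"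
      using True lexcut_coeff_telescope[of p k xbar] by (cases "p = k") (auto simp: lexcut_coeff_def)
    moreover have "(\<Sum>i\<in>{p<..k}. ?d i * y$i) \<ge> 0"
      using y lexcut_coeff_nonneg[OF xbar]
      by (auto simp: nonneg_int_points_def intro!: sum_nonneg)
    moreover have "(\<Sum>i\<in>{..<p}. ?d i * y$i) = (\<Sum>i\<in>{..<p}. ?d i * xbar$i)"
      using equal_before_p by simp
    ultimately show ?thesis
      unfolding split[of "\<lambda>i. ?d i * y$i"] split[of "\<lambda>i. ?d i * xbar$i"] by linarith
  qed
qed simp

lemma convex_linear_superlevel_set:
  fixes f :: "'a::real_vector \<Rightarrow> real"
  assumes "linear f"
  shows "convex {y. c \<le> f y}"
  using convex_linear_vimage[OF assms convex_real_interval(1)[of c]] by (simp add: vimage_def)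

theorem lemma2:
  fixes xbar x :: "real^'n::{finite,linorder}" and k :: 'n
  assumes "xbar \<in> nonneg_int_points"
    and "x \<in> Q xbar"
  shows "(\<Sum>i\<in>{..k}. lexcut_coeff xbar k i * x$i) \<ge> (\<Sum>i\<in>{..k}. lexcut_coeff xbar k i * xbar$i)"
proof -
  let ?cut = "\<lambda>y. \<Sum>i\<in>{..k}. lexcut_coeff xbar k i * y$i"
  have "linear ?cut"
    by (intro bounded_linear.linear bounded_linear_sum bounded_linear_const_mult bounded_linear_vec_nth)
  then have "convex {y. ?cut xbar \<le> ?cut y}"
    by (rule convex_linear_superlevel_set)
  moreover have "{y \<in> nonneg_int_points. lex_ge y xbar} \<subseteq> {y. ?cut xbar \<le> ?cut y}"
    using lexcut_valid_at_lex_greater_point[OF assms(1)] by blast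
  ultimately have "Q xbar \<subseteq> {y. ?cut xbar \<le> ?cut y}"
    unfolding Q_def by (rule hull_minimal[rotated])
  then show ?thesis
    using assms(2) by blast
qed

end
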